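(* There is a finite set $D$ and an infinite set $\Gamma \subseteq \mathbf{\Phi}_D$ of weighted relations such that $\mathrm{Imp}(\mathrm{wPol}(\Gamma)) \neq \mathrm{wRelClone}(\Gamma)$.
   Context: Let $\overline{\mathbb{Q}}=\mathbb{Q}\cup\{\infty\}$. An $m$-ary weighted relation on a finite set $D$ ($m\ge1$) is a map $\gamma:D^m\to\overline{\mathbb{Q}}$; $\mathbf{\Phi}_D$ denotes the set of all weighted relations on $D$. $\mathrm{Feas}(\gamma)=\{\mathbf{x}\in D^m:\gamma(\mathbf{x})<\infty\}$. $\phi_=$ is the binary equality relation ($0$ if $x=y$, $\infty$ otherwise) and $\phi_\emptyset$ is the unary relation that is $\infty$ everywhere. A weighted relation $\gamma$ of arity $r$ is obtained by addition from $\gamma_1$ (arity $s$) and $\gamma_2$ (arity $t$) if $\gamma(x_1,\dots,x_r)=\gamma_1(y_1,\dots,y_s)+\gamma_2(z_1,\dots,z_t)$ for some fixed choice of the $y_i,z_j$ among $x_1,\dots,x_r$; it is obtained by minimisation from $\gamma'$ of arity $r+s$ if $\gamma(x_1,\dots,x_r)=\min_{(y_1,\dots,y_s)\in D^s}\gamma'(x_1,\dots,x_r,y_1,\dots,y_s)$. A set $\Gamma\subseteq\mathbf{\Phi}_D$ is a weighted relational clone if it contains $\phi_=$ and $\phi_\emptyset$ and is closed under addition, minimisation, scaling by non-negative rational constants (with $0\cdot\infty=\infty$) and addition of rational constants; $\mathrm{wRelClone}(\Gamma)$ is the smallest weighted relational clone containing $\Gamma$. A $k$-ary operation is a map $f:D^k\to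 D$, applied to tuples coordinatewise. $f$ is a polymorphism of $\gamma$ if $f(\mathbf{x}_1,\dots,\mathbf{x}_k)\in\mathrm{Feas}(\gamma)$ whenever all $\mathbf{x}_i\in\mathrm{Feas}(\gamma)$; $\mathrm{Pol}(\Gamma)$ is the set of common polymorphisms of all $\gamma\in\Gamma$. Projections are $e^{(k)}_i(x_1,\dots,x_k)=x_i$. A clone is a set of operations containing all projections and closed under superposition ($f[g_1,\dots,g_k](\mathbf{x})=f(g_1(\mathbf{x}),\dots,g_k(\mathbf{x}))$); $C^{(k)}$ denotes its $k$-ary members. A $k$-ary weighting of a clone $C$ is a function $\omega:C^{(k)}\to\mathbb{Q}$ with $\sum_{f\in C^{(k)}}\omega(f)=0$ and $\omega(f)<0$ only if $f$ is a projection. It is a weighted polymorphism of $\gamma$ ($\gamma$ is improved by $\omega$) if $C\subseteq\mathrm{Pol}(\gamma)$ and for all $\mathbf{x}_1,\dots,\mathbf{x}_k\in\mathrm{Feas}(\gamma)$, $\sum_{f\in C^{(k)}}\omega(f)\gamma(f(\mathbf{x}_1,\dots,\mathbf{x}_k))\le0$. $\mathrm{wPol}(\Gamma)$ is the set of all weightings of the clone $\mathrm{Pol}(\Gamma)$ that are weighted polymorphisms of every $\gamma\in\Gamma$; $\mathrm{Imp}(\Omega)$ is the set of weighted relations in $\mathbf{\Phi}_D$ improved by every $\omega\in\Omega$. *)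

theory Defs
  imports Complex_Main
begin

datatype qbar = Fin rat | PInf

fun qadd :: "qbar \<Rightarrow> qbar \<Rightarrow> qbar" where
  "qadd (Fin a) (Fin b) = Fin (a + b)"
| "qadd _ _ = PInf"

text \<open>Scaling by a non-negative rational, with the convention 0 * infinity = infinity.\<close>
fun qscale :: "rat \<Rightarrow> qbar \<Rightarrow> qbar" where
  "qscale c (Fin a) = Fin (c * a)"
| "qscale c PInf = PInf"

fun fval :: "qbar \<Rightarrow> rat" where
  "fval (Fin a) = a"
| "fval PInf = 0"

definition qMin :: "qbar set \<Rightarrow> qbar" where
  "qMin S = (if (\<exists>a. Fin a \<in> S) then Fin (Min {a. Fin a \<in> S}) else PInf)"

definition tuples :: "nat set \<Rightarrow> nat \<Rightarrow> nat list set" where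
  "tuples D m = {x. length x = m \<and> set x \<subseteq> D}"

text \<open>A weighted relation is a pair (arity m, function); the function is normalised to be
  infinity outside D^m, so that it is determined by its values on D^m.\<close>
type_synonym wrel = "nat \<times> (nat list \<Rightarrow> qbar)"

definition wrels :: "nat set \<Rightarrow> wrel set" where
  "wrels D = {(m, g). m \<ge> 1 \<and> (\<forall>x. x \<notin> tuples D m \<longrightarrow> g x = PInf)}"

definition feas :: "nat set \<Rightarrow> wrel \<Rightarrow> nat list set" where
  "feas D \<gamma> = {x \<in> tuples D (fst \<gamma>). snd \<gamma> x \<noteq> PInf}"

definition phi_eq :: "nat set \<Rightarrow> wrel" where
  "phi_eq D = (2, \<lambda>x. if x \<in> tuples D 2 \<and> x ! 0 = x ! 1 then Fin 0 else PInf)"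

definition phi_empty :: wrel where
  "phi_empty = (1, \<lambda>x. PInf)"

definition wadd :: "nat set \<Rightarrow> nat \<Rightarrow> (nat list \<Rightarrow> qbar) \<Rightarrow> nat list
    \<Rightarrow> (nat list \<Rightarrow> qbar) \<Rightarrow> nat list \<Rightarrow> wrel" where
  "wadd D r g1 ys g2 zs = (r, \<lambda>x. if x \<in> tuples D r
       then qadd (g1 (map (\<lambda>i. x ! i) ys)) (g2 (map (\<lambda>i. x ! i) zs)) else PInf)"

definition wmin :: "nat set \<Rightarrow> nat \<Rightarrow> nat \<Rightarrow> (nat list \<Rightarrow> qbar) \<Rightarrow> wrel" where
  "wmin D r s g = (r, \<lambda>x. if x \<in> tuples D r
       then qMin {g (x @ y) | y. y \<in> tuples D s} else PInf)"

definition wrel_clone :: "nat set \<Rightarrow> wrel set \<Rightarrow> bool" where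
  "wrel_clone D C \<longleftrightarrow> C \<subseteq> wrels D \<and> phi_eq D \<in> C \<and> phi_empty \<in> C
   \<and> (\<forall>s g1 t g2 r ys zs. (s, g1) \<in> C \<and> (t, g2) \<in> C \<and> r \<ge> 1
        \<and> length ys = s \<and> length zs = t \<and> set ys \<subseteq> {..<r} \<and> set zs \<subseteq> {..<r}
        \<longrightarrow> wadd D r g1 ys g2 zs \<in> C)
   \<and> (\<forall>r s g. (r + s, g) \<in> C \<and> r \<ge> 1 \<longrightarrow> wmin D r s g \<in> C)
   \<and> (\<forall>m g c. (m, g) \<in> C \<and> c \<ge> 0 \<longrightarrow> (m, \<lambda>x. qscale c (g x)) \<in> C)
   \<and> (\<forall>m g c. (m, g) \<in> C \<longrightarrow> (m, \<lambda>x. qadd (g x) (Fin c)) \<in> C)"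

definition wRelClone :: "nat set \<Rightarrow> wrel set \<Rightarrow> wrel set" where
  "wRelClone D \<Gamma> = \<Inter> {C. wrel_clone D C \<and> \<Gamma> \<subseteq> C}"

text \<open>Operations: (arity k >= 1, function D^k -> D), normalised to 0 outside D^k.\<close>
type_synonym op = "nat \<times> (nat list \<Rightarrow> nat)"

definition ops :: "nat set \<Rightarrow> op set" where
  "ops D = {(k, f). k \<ge> 1 \<and> (\<forall>x \<in> tuples D k. f x \<in> D) \<and> (\<forall>x. x \<notin> tuples D k \<longrightarrow> f x = 0)}"

definition app :: "(nat list \<Rightarrow> nat) \<Rightarrow> nat list list \<Rightarrow> nat \<Rightarrow> nat list" where
  "app f xs m = map (\<lambda>j. f (map (\<lambda>x. x ! j) xs)) [0..<m]"

definition proj :: "nat set \<Rightarrow> nat \<Rightarrow> nat \<Rightarrow> op" where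
  "proj D k i = (k, \<lambda>x. if x \<in> tuples D k then x ! i else 0)"

definition superpos :: "nat set \<Rightarrow> nat \<Rightarrow> (nat list \<Rightarrow> nat) \<Rightarrow> (nat list \<Rightarrow> nat) list \<Rightarrow> op" where
  "superpos D n f gs = (n, \<lambda>x. if x \<in> tuples D n then f (map (\<lambda>g. g x) gs) else 0)"

definition is_clone :: "nat set \<Rightarrow> op set \<Rightarrow> bool" where
  "is_clone D C \<longleftrightarrow> C \<subseteq> ops D
   \<and> (\<forall>k i. k \<ge> 1 \<and> i < k \<longrightarrow> proj D k i \<in> C)
   \<and> (\<forall>k f n gs. (k, f) \<in> C \<and> length gs = k \<and> (\<forall>g \<in> set gs. (n, g) \<in> C)
        \<longrightarrow> superpos D n f gs \<in> C)"

definition kary :: "op set \<Rightarrow> nat \<Rightarrow> (nat list \<Rightarrow> nat) set" where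
  "kary C k = {f. (k, f) \<in> C}"

definition Pol :: "nat set \<Rightarrow> wrel set \<Rightarrow> op set" where
  "Pol D \<Gamma> = {(k, f) \<in> ops D. \<forall>\<gamma> \<in> \<Gamma>. \<forall>xs. length xs = k \<and> set xs \<subseteq> feas D \<gamma>
        \<longrightarrow> app f xs (fst \<gamma>) \<in> feas D \<gamma>}"

definition weighting :: "nat set \<Rightarrow> op set \<Rightarrow> nat \<Rightarrow> ((nat list \<Rightarrow> nat) \<Rightarrow> rat) \<Rightarrow> bool" where
  "weighting D C k \<omega> \<longleftrightarrow> is_clone D C \<and> k \<ge> 1
   \<and> (\<forall>f. f \<notin> kary C k \<longrightarrow> \<omega> f = 0)
   \<and> (\<Sum>f \<in> kary C k. \<omega> f) = 0
   \<and> (\<forall>f \<in> kary C k. \<omega> f < 0 \<longrightarrow> (\<exists>i<k. (k, f) = proj D k i))"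

text \<open>A weighting together with the clone it is a weighting of, and its arity.\<close>
type_synonym wt = "op set \<times> nat \<times> ((nat list \<Rightarrow> nat) \<Rightarrow> rat)"

definition improves :: "nat set \<Rightarrow> wt \<Rightarrow> wrel \<Rightarrow> bool" where
  "improves D w \<gamma> \<longleftrightarrow> (case w of (C, k, \<omega>) \<Rightarrow>
     C \<subseteq> Pol D {\<gamma>}
     \<and> (\<forall>xs. length xs = k \<and> set xs \<subseteq> feas D \<gamma> \<longrightarrow>
          (\<Sum>f \<in> kary C k. \<omega> f * fval (snd \<gamma> (app f xs (fst \<gamma>)))) \<le> 0))"

definition wPol :: "nat set \<Rightarrow> wrel set \<Rightarrow> wt set" where
  "wPol D \<Gamma> = {(C, k, \<omega>). C = Pol D \<Gamma> \<and> weighting D C k \<omega> \<and> (\<forall>\<gamma> \<in> \<Gamma>. improves D (C, k, \<omega>) \<gamma>)}"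

definition Imp :: "nat set \<Rightarrow> wt set \<Rightarrow> wrel set" where
  "Imp D \<Omega> = {\<gamma> \<in> wrels D. \<forall>w \<in> \<Omega>. improves D w \<gamma>}"

end

theory Submission
  imports Defs
begin

text \<open>Take \<open>D = {0,1,2}\<close> and the two unary retractions \<open>a\<close> (sending 2 to 1) and \<open>b\<close>
  (sending 2 to 0). The weighted relations \<open>\<gamma>\<close> admitting some \<open>0 < e \<le> 1\<close> with
  \<open>\<gamma>(b x) \<le> \<gamma>(x)\<close> and \<open>e \<gamma>(a x) + (1 - e) \<gamma>(b x) \<le> \<gamma>(x)\<close> form a weighted relational clone.
  The unary relations \<open>\<gamma>\<^sub>n = (0, 1, 1/(n+1))\<close> belong to it (take \<open>e = 1/(n+1)\<close>), but their
  limit \<open>\<gamma> = (0, 1, 0)\<close> does not, so \<open>\<gamma> \<notin> wRelClone(\<Gamma>)\<close> for \<open>\<Gamma> = {\<gamma>\<^sub>n}\<close>. On the other hand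
  every \<open>\<gamma>\<^sub>n\<close> has the polymorphisms of \<open>\<gamma>\<close>, and the inequality expressing that a weighting
  improves \<open>\<gamma>\<^sub>n\<close> is affine in \<open>1/(n+1)\<close>; letting \<open>n \<rightarrow> \<infinity>\<close> shows that \<open>\<gamma> \<in> Imp(wPol(\<Gamma>))\<close>.\<close>

lemma qadd_neq_PInf_iff: "qadd u v \<noteq> PInf \<longleftrightarrow> u \<noteq> PInf \<and> v \<noteq> PInf"
  by (cases u; cases v) auto

lemma fval_qadd: "u \<noteq> PInf \<Longrightarrow> v \<noteq> PInf \<Longrightarrow> fval (qadd u v) = fval u + fval v"
  by (cases u; cases v) auto

lemma qscale_neq_PInf_iff: "qscale c u \<noteq> PInf \<longleftrightarrow> u \<noteq> PInf"
  by (cases u) auto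

lemma fval_qscale: "fval (qscale c u) = c * fval u"
  by (cases u) auto

lemma finite_Fin_preimage: "finite S \<Longrightarrow> finite {v. Fin v \<in> S}"
  by (rule finite_subset[of _ "fval ` S"]) force+

lemma qMin_in:
  assumes "finite S" "qMin S \<noteq> PInf"
  shows "qMin S \<in> S"
proof -
  have ex: "\<exists>v. Fin v \<in> S" using assms(2) by (auto simp: qMin_def split: if_splits)
  then have "Min {v. Fin v \<in> S} \<in> {v. Fin v \<in> S}"
    using finite_Fin_preimage[OF assms(1)] by (intro Min_in) auto
  then show ?thesis using ex by (simp add: qMin_def)
qed

lemma qMin_le:
  assumes "finite S" "u \<in> S" "u \<noteq> PInf"
  shows "qMin S \<noteq> PInf \<and> fval (qMin S) \<le> fval u"
proof -
  obtain v where v: "u = Fin v" using assms(3) by (cases u) auto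
  then have "Min {v. Fin v \<in> S} \<le> v"
    using finite_Fin_preimage[OF assms(1)] assms(2) by (intro Min_le) auto
  then show ?thesis using v assms(2) by (auto simp: qMin_def)
qed

lemma finite_tuples: "finite D \<Longrightarrow> finite (tuples D m)"
  unfolding tuples_def using finite_lists_length_eq[of D m] by (simp add: conj_commute)

lemma map_in_tuples: "f ` D \<subseteq> D \<Longrightarrow> x \<in> tuples D m \<Longrightarrow> map f x \<in> tuples D m"
  by (auto simp: tuples_def)

lemma append_in_tuples: "x \<in> tuples D r \<Longrightarrow> y \<in> tuples D s \<Longrightarrow> x @ y \<in> tuples D (r + s)"
  by (auto simp: tuples_def)

lemma select_in_tuples:
  "x \<in> tuples D r \<Longrightarrow> set ys \<subseteq> {..<r} \<Longrightarrow> map (\<lambda>i. x ! i) ys \<in> tuples D (length ys)"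
  unfolding tuples_def by (auto intro!: subsetD[of "set x"] nth_mem)

lemma select_map:
  "x \<in> tuples D r \<Longrightarrow> set ys \<subseteq> {..<r}
    \<Longrightarrow> map (\<lambda>i. map f x ! i) ys = map f (map (\<lambda>i. x ! i) ys)"
  by (auto simp: tuples_def)

text \<open>The requirement \<open>fval v \<le> fval w\<close> (that is, \<open>\<gamma>(b x) \<le> \<gamma>(x)\<close>) makes the set of admissible
  weights \<open>e\<close> downward closed, so finitely many relations always share a common weight.\<close>
definition dominated_at :: "rat \<Rightarrow> qbar \<Rightarrow> qbar \<Rightarrow> qbar \<Rightarrow> bool" where
  "dominated_at e u v w \<longleftrightarrow> (w \<noteq> PInf \<longrightarrow> u \<noteq> PInf \<and> v \<noteq> PInf
     \<and> fval v \<le> fval w \<and> e * fval u + (1 - e) * fval v \<le> fval w)"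

lemma dominated_at_mono:
  assumes "dominated_at e u v w" "0 < d" "d \<le> e"
  shows "dominated_at d u v w"
  unfolding dominated_at_def
proof (intro impI)
  assume w: "w \<noteq> PInf"
  define A B V where "A = fval u" and "B = fval v" and "V = fval w"
  have BV: "B \<le> V" and mix: "e * A + (1 - e) * B \<le> V"
    using assms(1) w by (auto simp: dominated_at_def A_def B_def V_def)
  have "d * A + (1 - d) * B = (d / e) * (e * A + (1 - e) * B) + (1 - d / e) * B"
    using assms by (simp add: field_simps)
  also have "\<dots> \<le> (d / e) * V + (1 - d / e) * V"
    using assms BV mix by (intro add_mono mult_left_mono) auto
  also have "\<dots> = V" by (simp add: algebra_simps)
  finally show
    "u \<noteq> PInf \<and> v \<noteq> PInf \<and> fval v \<le> fval w \<and> d * fval u + (1 - d) * fval v \<le> fval w"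
    using assms(1) w by (simp add: dominated_at_def A_def B_def V_def)
qed

lemma dominated_at_qadd:
  "dominated_at e u v w \<Longrightarrow> dominated_at e u' v' w'
    \<Longrightarrow> dominated_at e (qadd u u') (qadd v v') (qadd w w')"
  by (auto simp: dominated_at_def qadd_neq_PInf_iff fval_qadd algebra_simps)

lemma dominated_at_Fin: "dominated_at e (Fin c) (Fin c) (Fin c)"
  by (simp add: dominated_at_def algebra_simps)

lemma dominated_at_qscale:
  assumes "dominated_at e u v w" "0 \<le> c"
  shows "dominated_at e (qscale c u) (qscale c v) (qscale c w)"
proof -
  have "c * (e * fval u + (1 - e) * fval v) \<le> c * fval w" if "w \<noteq> PInf"
    using assms that by (intro mult_left_mono) (auto simp: dominated_at_def)
  then show ?thesis
    using assms by (auto simp: dominated_at_def qscale_neq_PInf_iff fval_qscale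
        algebra_simps intro: mult_left_mono)
qed

lemma dominated_at_lower:
  assumes "dominated_at e u v w" "0 \<le> e" "e \<le> 1"
    and "u \<noteq> PInf \<Longrightarrow> u' \<noteq> PInf \<and> fval u' \<le> fval u"
    and "v \<noteq> PInf \<Longrightarrow> v' \<noteq> PInf \<and> fval v' \<le> fval v"
  shows "dominated_at e u' v' w"
proof -
  have "e * fval u' + (1 - e) * fval v' \<le> e * fval u + (1 - e) * fval v"
    if "u \<noteq> PInf" "v \<noteq> PInf"
    using assms that by (intro add_mono mult_left_mono) auto
  then show ?thesis using assms(1,4,5) unfolding dominated_at_def by fastforce
qed

subsection \<open>A weighted relational clone determined by two unary operations\<close>

locale unary_pair =
  fixes D :: "nat set" and a b :: "nat \<Rightarrow> nat"
  assumes finite_D: "finite D" and a_into: "a ` D \<subseteq> D" and b_into: "b ` D \<subseteq> D"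
begin

definition mix_bounded :: "rat \<Rightarrow> nat \<Rightarrow> (nat list \<Rightarrow> qbar) \<Rightarrow> bool" where
  "mix_bounded e m g \<longleftrightarrow> (\<forall>x \<in> tuples D m. dominated_at e (g (map a x)) (g (map b x)) (g x))"

definition mix_clone :: "wrel set" where
  "mix_clone = {(m, g) \<in> wrels D. \<exists>e. 0 < e \<and> e \<le> 1 \<and> mix_bounded e m g}"

lemma mix_bounded_mono: "mix_bounded e m g \<Longrightarrow> 0 < d \<Longrightarrow> d \<le> e \<Longrightarrow> mix_bounded d m g"
  using dominated_at_mono by (auto simp: mix_bounded_def)

lemma mix_bounded_wadd:
  assumes "mix_bounded e s g1" "mix_bounded e t g2" "length ys = s" "length zs = t"
    and "set ys \<subseteq> {..<r}" "set zs \<subseteq> {..<r}"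
  shows "mix_bounded e r (snd (wadd D r g1 ys g2 zs))"
  unfolding mix_bounded_def
proof
  fix x assume x: "x \<in> tuples D r"
  define y z where "y = map (\<lambda>i. x ! i) ys" and "z = map (\<lambda>i. x ! i) zs"
  have "y \<in> tuples D s" "z \<in> tuples D t"
    using select_in_tuples[OF x] assms(3-6) by (auto simp: y_def z_def)
  then have "dominated_at e (qadd (g1 (map a y)) (g2 (map a z)))
      (qadd (g1 (map b y)) (g2 (map b z))) (qadd (g1 y) (g2 z))"
    using assms(1,2) by (intro dominated_at_qadd) (auto simp: mix_bounded_def)
  moreover have "map a x \<in> tuples D r" "map b x \<in> tuples D r"
    using x a_into b_into by (auto intro: map_in_tuples)
  ultimately show "dominated_at e (snd (wadd D r g1 ys g2 zs) (map a x))
      (snd (wadd D r g1 ys g2 zs) (map b x)) (snd (wadd D r g1 ys g2 zs) x)"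
    using x assms(5,6) by (simp add: wadd_def y_def z_def select_map)
qed

lemma mix_bounded_wmin:
  assumes "mix_bounded e (r + s) g" "0 \<le> e" "e \<le> 1"
  shows "mix_bounded e r (snd (wmin D r s g))"
  unfolding mix_bounded_def
proof
  fix x assume x: "x \<in> tuples D r"
  define S where "S u = {g (u @ y) | y. y \<in> tuples D s}" for u
  have finite_S: "finite (S u)" for u
    using finite_tuples[OF finite_D] by (simp add: S_def setcompr_eq_image)
  have val: "snd (wmin D r s g) u = qMin (S u)" if "u \<in> tuples D r" for u
    using that by (simp add: wmin_def S_def)
  have ax: "map a x \<in> tuples D r" and bx: "map b x \<in> tuples D r"
    using x a_into b_into by (auto intro: map_in_tuples)
  show "dominated_at e (snd (wmin D r s g) (map a x)) (snd (wmin D r s g) (map b x))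
      (snd (wmin D r s g) x)"
  proof (cases "qMin (S x) = PInf")
    case True
    then show ?thesis by (simp add: val[OF x] dominated_at_def)
  next
    case False
    then have "qMin (S x) \<in> S x" by (rule qMin_in[OF finite_S, rotated])
    then obtain y where y: "y \<in> tuples D s" and min: "qMin (S x) = g (x @ y)"
      unfolding S_def by blast
    have "dominated_at e (g (map a (x @ y))) (g (map b (x @ y))) (g (x @ y))"
      using assms(1) append_in_tuples[OF x y] unfolding mix_bounded_def by (rule bspec)
    moreover have "g (map a (x @ y)) \<in> S (map a x)" "g (map b (x @ y)) \<in> S (map b x)"
      using map_in_tuples[OF a_into y] map_in_tuples[OF b_into y] unfolding S_def by auto
    ultimately have "dominated_at e (qMin (S (map a x))) (qMin (S (map b x))) (qMin (S x))"
      unfolding min using assms(2,3)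
      by (elim dominated_at_lower) (auto dest: qMin_le[OF finite_S])
    then show ?thesis by (simp only: val x ax bx)
  qed
qed

lemma mix_bounded_scale: "mix_bounded e m g \<Longrightarrow> 0 \<le> c \<Longrightarrow> mix_bounded e m (\<lambda>x. qscale c (g x))"
  by (simp add: mix_bounded_def dominated_at_qscale)

lemma mix_bounded_add_const: "mix_bounded e m g \<Longrightarrow> mix_bounded e m (\<lambda>x. qadd (g x) (Fin c))"
  by (simp add: mix_bounded_def dominated_at_qadd dominated_at_Fin)

lemma mix_bounded_phi_eq: "mix_bounded e 2 (snd (phi_eq D))"
  unfolding mix_bounded_def
proof
  fix x assume x: "x \<in> tuples D 2"
  have "length x = 2" using x by (simp add: tuples_def)
  moreover have "map a x \<in> tuples D 2" "map b x \<in> tuples D 2"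
    using x a_into b_into by (auto intro: map_in_tuples)
  ultimately show "dominated_at e (snd (phi_eq D) (map a x)) (snd (phi_eq D) (map b x))
      (snd (phi_eq D) x)"
    using x by (auto simp: phi_eq_def dominated_at_def)
qed

lemma mix_clone_common_weight:
  assumes "(s, g1) \<in> mix_clone" "(t, g2) \<in> mix_clone"
  obtains e where "0 < e" "e \<le> 1" "mix_bounded e s g1" "mix_bounded e t g2"
proof -
  obtain e1 e2 where "0 < e1" "e1 \<le> 1" "mix_bounded e1 s g1"
    and "0 < e2" "e2 \<le> 1" "mix_bounded e2 t g2"
    using assms by (auto simp: mix_clone_def)
  then show ?thesis
    by (intro that[of "min e1 e2"]) (auto intro: mix_bounded_mono)
qed

lemma mix_cloneI:
  "\<gamma> \<in> wrels D \<Longrightarrow> 0 < e \<Longrightarrow> e \<le> 1 \<Longrightarrow> mix_bounded e (fst \<gamma>) (snd \<gamma>) \<Longrightarrow> \<gamma> \<in> mix_clone"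
  by (cases \<gamma>) (auto simp: mix_clone_def)

lemma phi_eq_in_mix_clone: "phi_eq D \<in> mix_clone"
  using mix_bounded_phi_eq[of 1] by (intro mix_cloneI) (auto simp: phi_eq_def wrels_def)

lemma phi_empty_in_mix_clone: "phi_empty \<in> mix_clone"
  by (rule mix_cloneI[of _ 1]) (auto simp: phi_empty_def wrels_def mix_bounded_def dominated_at_def)

lemma wadd_in_mix_clone:
  assumes "(s, g1) \<in> mix_clone" "(t, g2) \<in> mix_clone" "1 \<le> r" "length ys = s"
    "length zs = t" "set ys \<subseteq> {..<r}" "set zs \<subseteq> {..<r}"
  shows "wadd D r g1 ys g2 zs \<in> mix_clone"
proof -
  obtain e where "0 < e" "e \<le> 1" "mix_bounded e s g1" "mix_bounded e t g2"
    using mix_clone_common_weight[OF assms(1,2)] by blast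
  moreover have "wadd D r g1 ys g2 zs \<in> wrels D"
    using assms(3) by (simp add: wadd_def wrels_def)
  ultimately show ?thesis
    using assms(4-7) mix_bounded_wadd[of e s g1 t g2 ys zs r]
    by (intro mix_cloneI) (simp_all add: wadd_def)
qed

lemma wmin_in_mix_clone:
  assumes "(r + s, g) \<in> mix_clone" "1 \<le> r"
  shows "wmin D r s g \<in> mix_clone"
proof -
  obtain e where "0 < e" "e \<le> 1" "mix_bounded e (r + s) g"
    using assms(1) by (auto simp: mix_clone_def)
  moreover have "wmin D r s g \<in> wrels D"
    using assms(2) by (simp add: wmin_def wrels_def)
  ultimately show ?thesis
    using mix_bounded_wmin[of e r s g] by (intro mix_cloneI) (simp_all add: wmin_def)
qed

lemma scale_in_mix_clone:
  "(m, g) \<in> mix_clone \<Longrightarrow> 0 \<le> c \<Longrightarrow> (m, \<lambda>x. qscale c (g x)) \<in> mix_clone"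
  by (auto simp: mix_clone_def wrels_def intro: mix_bounded_scale)

lemma add_const_in_mix_clone:
  "(m, g) \<in> mix_clone \<Longrightarrow> (m, \<lambda>x. qadd (g x) (Fin c)) \<in> mix_clone"
  by (auto simp: mix_clone_def wrels_def intro: mix_bounded_add_const)

lemma mix_clone_subset_wrels: "mix_clone \<subseteq> wrels D"
  by (auto simp: mix_clone_def)

lemma wrel_clone_mix_clone: "wrel_clone D mix_clone"
  unfolding wrel_clone_def
  by (intro conjI allI impI mix_clone_subset_wrels phi_eq_in_mix_clone phi_empty_in_mix_clone
      wadd_in_mix_clone wmin_in_mix_clone scale_in_mix_clone add_const_in_mix_clone) simp_all

end

lemma wRelClone_least:
  assumes "wrel_clone D C" "\<Gamma> \<subseteq> C"
  shows "wRelClone D \<Gamma> \<subseteq> C"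
  unfolding wRelClone_def using assms by (intro Inter_lower CollectI conjI)

subsection \<open>Weighted polymorphisms and limits\<close>

definition perturb ::
  "(nat list \<Rightarrow> qbar) \<Rightarrow> (nat list \<Rightarrow> rat) \<Rightarrow> rat \<Rightarrow> nat list \<Rightarrow> qbar" where
  "perturb g h t x = (case g x of Fin v \<Rightarrow> Fin (v + t * h x) | PInf \<Rightarrow> PInf)"

lemma fval_perturb:
  "fval (perturb g h t x) = fval (g x) + t * (if g x = PInf then 0 else h x)"
  by (cases "g x") (auto simp: perturb_def)

lemma perturb_eq_PInf_iff: "perturb g h t x = PInf \<longleftrightarrow> g x = PInf"
  by (cases "g x") (auto simp: perturb_def)

lemma feas_perturb: "feas D (m, perturb g h t) = feas D (m, g)"
  by (simp add: feas_def perturb_eq_PInf_iff)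

lemma nonpos_if_perturbations_nonpos:
  fixes S T :: rat
  assumes "\<And>n :: nat. S + T / (of_nat n + 1) \<le> 0"
  shows "S \<le> 0"
proof (rule ccontr)
  assume "\<not> S \<le> 0"
  then obtain n :: nat where "- T < of_nat n * S" "0 < S"
    using ex_less_of_nat_mult[of S "- T"] by auto
  then have "- T < (of_nat n + 1) * S" by (simp add: distrib_right)
  then have "0 < S + T / (of_nat n + 1)" by (simp add: field_simps)
  with assms[of n] show False by simp
qed

lemma improves_if_improves_perturbations:
  assumes "\<And>n :: nat. improves D w (m, perturb g h (1 / (of_nat n + 1)))"
  shows "improves D w (m, g)"
proof -
  obtain C k \<omega> where w: "w = (C, k, \<omega>)" by (cases w) auto
  have Pol_eq: "Pol D {(m, perturb g h t)} = Pol D {(m, g)}" for t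
    by (simp add: Pol_def feas_perturb)
  have "(\<Sum>f \<in> kary C k. \<omega> f * fval (g (app f xs m))) \<le> 0"
    if xs: "length xs = k" "set xs \<subseteq> feas D (m, g)" for xs
  proof (rule nonpos_if_perturbations_nonpos)
    fix n :: nat
    define S T where "S = (\<Sum>f \<in> kary C k. \<omega> f * fval (g (app f xs m)))"
      and "T = (\<Sum>f \<in> kary C k. \<omega> f * (if g (app f xs m) = PInf then 0 else h (app f xs m)))"
    have "(\<Sum>f \<in> kary C k. \<omega> f * fval (perturb g h (1 / (of_nat n + 1)) (app f xs m)))
        = S + T / (of_nat n + 1)"
      by (simp add: S_def T_def fval_perturb sum.distrib sum_divide_distrib algebra_simps)
    moreover have
      "(\<Sum>f \<in> kary C k. \<omega> f * fval (perturb g h (1 / (of_nat n + 1)) (app f xs m))) \<le> 0"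
      using assms[of n] xs by (simp add: w improves_def feas_perturb)
    ultimately show "S + T / (of_nat n + 1) \<le> 0" by simp
  qed
  then show ?thesis using assms[of 0] by (simp add: w improves_def Pol_eq)
qed

lemma in_Imp_wPol_if_perturbations:
  assumes "(m, g) \<in> wrels D" "\<And>n :: nat. (m, perturb g h (1 / (of_nat n + 1))) \<in> \<Gamma>"
  shows "(m, g) \<in> Imp D (wPol D \<Gamma>)"
proof -
  have "improves D w (m, g)" if "w \<in> wPol D \<Gamma>" for w
    using that assms(2) unfolding wPol_def by (blast intro: improves_if_improves_perturbations)
  then show ?thesis using assms(1) unfolding Imp_def by blast
qed

subsection \<open>The counterexample\<close>

definition D3 :: "nat set" where "D3 = {0, 1, 2}"

definition retract_2_to_1 :: "nat \<Rightarrow> nat" where "retract_2_to_1 v = (if v = 2 then 1 else v)"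

definition retract_2_to_0 :: "nat \<Rightarrow> nat" where "retract_2_to_0 v = (if v = 2 then 0 else v)"

interpretation D3: unary_pair D3 retract_2_to_1 retract_2_to_0
  by unfold_locales (auto simp: D3_def retract_2_to_1_def retract_2_to_0_def)

definition limit_rel :: "nat list \<Rightarrow> qbar" where
  "limit_rel z = (if z \<in> tuples D3 1 then Fin (if z = [1] then 1 else 0) else PInf)"

definition bump_at_2 :: "nat list \<Rightarrow> rat" where "bump_at_2 z = (if z = [2] then 1 else 0)"

definition approx_rel :: "nat \<Rightarrow> wrel" where
  "approx_rel n = (1, perturb limit_rel bump_at_2 (1 / (of_nat n + 1)))"

lemma tuples_D3_1: "z \<in> tuples D3 (Suc 0) \<longleftrightarrow> z = [0] \<or> z = [1] \<or> z = [2]"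
  by (auto simp: tuples_def D3_def length_Suc_conv)

lemma limit_rel_values: "limit_rel [0] = Fin 0" "limit_rel [Suc 0] = Fin 1" "limit_rel [2] = Fin 0"
  by (simp_all add: limit_rel_def tuples_D3_1)

lemma approx_rel_values:
  "snd (approx_rel n) [0] = Fin 0" "snd (approx_rel n) [Suc 0] = Fin 1"
  "snd (approx_rel n) [2] = Fin (1 / (of_nat n + 1))"
  by (simp_all add: approx_rel_def perturb_def limit_rel_def bump_at_2_def tuples_D3_1)

lemma limit_rel_wrels: "(1, limit_rel) \<in> wrels D3"
  by (auto simp: wrels_def limit_rel_def)

lemma approx_rel_wrels: "approx_rel n \<in> wrels D3"
  by (auto simp: approx_rel_def wrels_def perturb_def limit_rel_def)

lemma approx_rel_in_mix_clone: "approx_rel n \<in> D3.mix_clone"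
proof (rule D3.mix_cloneI)
  have "dominated_at (1 / (of_nat n + 1)) (snd (approx_rel n) (map retract_2_to_1 x))
      (snd (approx_rel n) (map retract_2_to_0 x)) (snd (approx_rel n) x)"
    if "x = [0] \<or> x = [1] \<or> x = [2]" for x
    using that by (elim disjE) (simp_all add: approx_rel_values dominated_at_def
        retract_2_to_1_def retract_2_to_0_def)
  then show "D3.mix_bounded (1 / (of_nat n + 1)) (fst (approx_rel n)) (snd (approx_rel n))"
    by (simp add: D3.mix_bounded_def approx_rel_def tuples_D3_1)
qed (simp_all add: approx_rel_wrels)

lemma inj_approx_rel: "inj approx_rel"
proof (rule injI)
  fix m n assume "approx_rel m = approx_rel n"
  then have "snd (approx_rel m) [2] = snd (approx_rel n) [2]" by (rule arg_cong)
  then have "1 / (of_nat m + 1) = (1 / (of_nat n + 1) :: rat)"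
    by (simp only: approx_rel_values qbar.inject)
  then show "m = n" by simp
qed

lemma limit_rel_notin_mix_clone: "(1, limit_rel) \<notin> D3.mix_clone"
proof
  assume "(1, limit_rel) \<in> D3.mix_clone"
  then obtain e where e: "0 < e" and bounded: "D3.mix_bounded e 1 limit_rel"
    by (auto simp: D3.mix_clone_def)
  have "[2] \<in> tuples D3 1" by (simp add: tuples_D3_1)
  with bounded have "dominated_at e (limit_rel (map retract_2_to_1 [2]))
      (limit_rel (map retract_2_to_0 [2])) (limit_rel [2])"
    unfolding D3.mix_bounded_def by (rule bspec)
  then have "e * 1 + (1 - e) * 0 \<le> (0 :: rat)"
    by (simp add: dominated_at_def limit_rel_values retract_2_to_1_def retract_2_to_0_def)
  with e show False by simp
qed

theorem lemma1:
  shows "\<exists>D :: nat set. finite D \<and> (\<exists>\<Gamma>. \<Gamma> \<subseteq> wrels D \<and> infinite \<Gamma>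
           \<and> Imp D (wPol D \<Gamma>) \<noteq> wRelClone D \<Gamma>)"
proof (intro exI conjI)
  show "finite D3" by (simp add: D3_def)
  show "range approx_rel \<subseteq> wrels D3" using approx_rel_wrels by auto
  show "infinite (range approx_rel)" using inj_approx_rel finite_imageD[of approx_rel UNIV] by auto
  have "(1, limit_rel) \<in> Imp D3 (wPol D3 (range approx_rel))"
    using limit_rel_wrels
    by (rule in_Imp_wPol_if_perturbations[where h = bump_at_2]) (simp add: approx_rel_def)
  moreover have "wRelClone D3 (range approx_rel) \<subseteq> D3.mix_clone"
    using D3.wrel_clone_mix_clone approx_rel_in_mix_clone by (intro wRelClone_least) auto
  ultimately show "Imp D3 (wPol D3 (range approx_rel)) \<noteq> wRelClone D3 (range approx_rel)"
    using limit_rel_notin_mix_clone by blast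
qed
end
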